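(* Let $\mathcal A$ be an abelian category and let $0\to F\xrightarrow{i} M\xrightarrow{d} C\to 0$ be a fully invariant short exact sequence in $\mathcal A$. (1) The following are equivalent: (i) $M$ is (strongly) self-$F$-split and, for every morphism $g:M\to M$ with pullback square $P\xrightarrow{j}M$, $P\xrightarrow{f}F$ of $i$ along $g$ (so $gj=if$), the unique morphism $l:\mathrm{Ker}(g)\to P$ with $jl=\ker(g)$ is a (fully invariant) section; (ii) $M$ is (strongly) self-Rickart and $M\cong F\oplus C$. (2) The following are equivalent: (i) $M$ is dual (strongly) self-$F$-split and, for every morphism $g:M\to M$ with pushout square $M\xrightarrow{p}Q$, $C\xrightarrow{h}Q$ of $d$ along $g$ (so $pg=hd$), the unique morphism $q:Q\to \mathrm{Coker}(g)$ with $qp=\mathrm{coker}(g)$ is a (fully coinvariant) retraction; (ii) $M$ is dual (strongly) self-Rickart and $M\cong F\oplus C$.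
   Context: Convention: each statement containing parenthetical words holds in two versions: one obtained by deleting all parenthetical words and one obtained by keeping all of them. Let $\mathcal A$ be an abelian category. A morphism $s:X\to Y$ is a section if $ts=1_X$ for some $t$, and a retraction if $st=1_Y$ for some $t$. A monomorphism $i:K\to M$ is fully invariant if for every morphism $h:M\to M$ there is $\alpha:K\to K$ with $hi=i\alpha$; an epimorphism $d:M\to C$ is fully coinvariant if for every $h:M\to M$ there is $\beta:C\to C$ with $dh=\beta d$. A short exact sequence $0\to F\xrightarrow{i}M\xrightarrow{d}C\to 0$ is fully invariant if $i$ is fully invariant. $M$ is (strongly) self-$F$-split if for every morphism $g:M\to M$, the morphism $j:P\to M$ in the pullback of $i$ along $g$ (equivalently $\ker(dg)$) is a (fully invariant) section; $M$ is dual (strongly) self-$F$-split if for every $g:M\to M$, the morphism $p:M\to Q$ in the pushout of $d$ along $g$ (equivalently $\mathrm{coker}(gi)$) is a (fully coinvariant) retraction. $M$ is (strongly) self-Rickart if for every $f:M\to M$, $\ker(f)$ is a (fully invariant) section, and dual (strongly) self-Rickart if for every $f:M\to M$, $\mathrm{coker}(f)$ is a (fully coinvariant) retraction. *)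

theory Defs
  imports Main
begin

text \<open>A category given by its objects, arrows, domain/codomain, composition
  (Cp g f means g after f, defined when Cod f = Dom g) and identities.\<close>
record ('o, 'm) cat =
  Ob :: "'o set"
  Ar :: "'m set"
  Dom :: "'m \<Rightarrow> 'o"
  Cod :: "'m \<Rightarrow> 'o"
  Cp :: "'m \<Rightarrow> 'm \<Rightarrow> 'm"
  Id :: "'o \<Rightarrow> 'm"

definition hom :: "('o, 'm) cat \<Rightarrow> 'o \<Rightarrow> 'o \<Rightarrow> 'm set" where
  "hom A a b = {f \<in> Ar A. Dom A f = a \<and> Cod A f = b}"

definition category :: "('o, 'm) cat \<Rightarrow> bool" where
  "category A \<longleftrightarrow>
     (\<forall>f\<in>Ar A. Dom A f \<in> Ob A \<and> Cod A f \<in> Ob A) \<and>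
     (\<forall>a\<in>Ob A. Id A a \<in> hom A a a) \<and>
     (\<forall>f\<in>Ar A. \<forall>g\<in>Ar A. Cod A f = Dom A g \<longrightarrow> Cp A g f \<in> hom A (Dom A f) (Cod A g)) \<and>
     (\<forall>f\<in>Ar A. Cp A f (Id A (Dom A f)) = f \<and> Cp A (Id A (Cod A f)) f = f) \<and>
     (\<forall>f\<in>Ar A. \<forall>g\<in>Ar A. \<forall>h\<in>Ar A. Cod A f = Dom A g \<and> Cod A g = Dom A h \<longrightarrow>
        Cp A h (Cp A g f) = Cp A (Cp A h g) f)"

definition mono :: "('o, 'm) cat \<Rightarrow> 'm \<Rightarrow> bool" where
  "mono A m \<longleftrightarrow> m \<in> Ar A \<and>
     (\<forall>x\<in>Ar A. \<forall>y\<in>Ar A. Cod A x = Dom A m \<and> Cod A y = Dom A m \<and> Dom A x = Dom A y \<and>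
        Cp A m x = Cp A m y \<longrightarrow> x = y)"

definition epi :: "('o, 'm) cat \<Rightarrow> 'm \<Rightarrow> bool" where
  "epi A e \<longleftrightarrow> e \<in> Ar A \<and>
     (\<forall>x\<in>Ar A. \<forall>y\<in>Ar A. Dom A x = Cod A e \<and> Dom A y = Cod A e \<and> Cod A x = Cod A y \<and>
        Cp A x e = Cp A y e \<longrightarrow> x = y)"

definition zero_obj :: "('o, 'm) cat \<Rightarrow> 'o \<Rightarrow> bool" where
  "zero_obj A z \<longleftrightarrow> z \<in> Ob A \<and>
     (\<forall>a\<in>Ob A. (\<exists>!f. f \<in> hom A a z) \<and> (\<exists>!f. f \<in> hom A z a))"

definition zero_mor :: "('o, 'm) cat \<Rightarrow> 'm \<Rightarrow> bool" where
  "zero_mor A f \<longleftrightarrow> f \<in> Ar A \<and>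
     (\<exists>z u v. zero_obj A z \<and> u \<in> hom A (Dom A f) z \<and> v \<in> hom A z (Cod A f) \<and> f = Cp A v u)"

definition kernel :: "('o, 'm) cat \<Rightarrow> 'm \<Rightarrow> 'm \<Rightarrow> bool" where
  "kernel A f k \<longleftrightarrow> f \<in> Ar A \<and> k \<in> Ar A \<and> Cod A k = Dom A f \<and> zero_mor A (Cp A f k) \<and>
     (\<forall>x\<in>Ar A. Cod A x = Dom A f \<and> zero_mor A (Cp A f x) \<longrightarrow>
        (\<exists>!u. u \<in> hom A (Dom A x) (Dom A k) \<and> Cp A k u = x))"

definition cokernel :: "('o, 'm) cat \<Rightarrow> 'm \<Rightarrow> 'm \<Rightarrow> bool" where
  "cokernel A f c \<longleftrightarrow> f \<in> Ar A \<and> c \<in> Ar A \<and> Dom A c = Cod A f \<and> zero_mor A (Cp A c f) \<and>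
     (\<forall>x\<in>Ar A. Dom A x = Cod A f \<and> zero_mor A (Cp A x f) \<longrightarrow>
        (\<exists>!u. u \<in> hom A (Cod A c) (Cod A x) \<and> Cp A u c = x))"

definition product :: "('o, 'm) cat \<Rightarrow> 'm \<Rightarrow> 'm \<Rightarrow> bool" where
  "product A p1 p2 \<longleftrightarrow> p1 \<in> Ar A \<and> p2 \<in> Ar A \<and> Dom A p1 = Dom A p2 \<and>
     (\<forall>x\<in>Ar A. \<forall>y\<in>Ar A. Dom A x = Dom A y \<and> Cod A x = Cod A p1 \<and> Cod A y = Cod A p2 \<longrightarrow>
        (\<exists>!u. u \<in> hom A (Dom A x) (Dom A p1) \<and> Cp A p1 u = x \<and> Cp A p2 u = y))"

definition coproduct :: "('o, 'm) cat \<Rightarrow> 'm \<Rightarrow> 'm \<Rightarrow> bool" where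
  "coproduct A e1 e2 \<longleftrightarrow> e1 \<in> Ar A \<and> e2 \<in> Ar A \<and> Cod A e1 = Cod A e2 \<and>
     (\<forall>x\<in>Ar A. \<forall>y\<in>Ar A. Cod A x = Cod A y \<and> Dom A x = Dom A e1 \<and> Dom A y = Dom A e2 \<longrightarrow>
        (\<exists>!u. u \<in> hom A (Cod A e1) (Cod A x) \<and> Cp A u e1 = x \<and> Cp A u e2 = y))"

text \<open>Abelian category (Freyd's definition): zero object, binary products and
  coproducts, kernels and cokernels, every mono is a kernel and every epi a cokernel.\<close>
definition abelian :: "('o, 'm) cat \<Rightarrow> bool" where
  "abelian A \<longleftrightarrow> category A \<and> (\<exists>z. zero_obj A z) \<and>
     (\<forall>a\<in>Ob A. \<forall>b\<in>Ob A. \<exists>p1 p2. product A p1 p2 \<and> Cod A p1 = a \<and> Cod A p2 = b) \<and>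
     (\<forall>a\<in>Ob A. \<forall>b\<in>Ob A. \<exists>e1 e2. coproduct A e1 e2 \<and> Dom A e1 = a \<and> Dom A e2 = b) \<and>
     (\<forall>f\<in>Ar A. \<exists>k. kernel A f k) \<and> (\<forall>f\<in>Ar A. \<exists>c. cokernel A f c) \<and>
     (\<forall>m. mono A m \<longrightarrow> (\<exists>f. kernel A f m)) \<and>
     (\<forall>e. epi A e \<longrightarrow> (\<exists>f. cokernel A f e))"

definition iso :: "('o, 'm) cat \<Rightarrow> 'm \<Rightarrow> bool" where
  "iso A f \<longleftrightarrow> f \<in> Ar A \<and> (\<exists>g\<in>hom A (Cod A f) (Dom A f).
     Cp A g f = Id A (Dom A f) \<and> Cp A f g = Id A (Cod A f))"

definition isomorphic :: "('o, 'm) cat \<Rightarrow> 'o \<Rightarrow> 'o \<Rightarrow> bool" where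
  "isomorphic A a b \<longleftrightarrow> (\<exists>f\<in>hom A a b. iso A f)"

text \<open>M is isomorphic to the direct sum (biproduct = product in an abelian category) of F and C.\<close>
definition iso_direct_sum :: "('o, 'm) cat \<Rightarrow> 'o \<Rightarrow> 'o \<Rightarrow> 'o \<Rightarrow> bool" where
  "iso_direct_sum A M F C \<longleftrightarrow>
     (\<exists>p1 p2. product A p1 p2 \<and> Cod A p1 = F \<and> Cod A p2 = C \<and> isomorphic A M (Dom A p1))"

definition is_section :: "('o, 'm) cat \<Rightarrow> 'm \<Rightarrow> bool" where
  "is_section A s \<longleftrightarrow> s \<in> Ar A \<and> (\<exists>t\<in>hom A (Cod A s) (Dom A s). Cp A t s = Id A (Dom A s))"

definition is_retraction :: "('o, 'm) cat \<Rightarrow> 'm \<Rightarrow> bool" where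
  "is_retraction A s \<longleftrightarrow> s \<in> Ar A \<and> (\<exists>t\<in>hom A (Cod A s) (Dom A s). Cp A s t = Id A (Cod A s))"

definition fully_invariant :: "('o, 'm) cat \<Rightarrow> 'm \<Rightarrow> bool" where
  "fully_invariant A i \<longleftrightarrow> mono A i \<and>
     (\<forall>h\<in>hom A (Cod A i) (Cod A i). \<exists>\<alpha>\<in>hom A (Dom A i) (Dom A i). Cp A h i = Cp A i \<alpha>)"

definition fully_coinvariant :: "('o, 'm) cat \<Rightarrow> 'm \<Rightarrow> bool" where
  "fully_coinvariant A d \<longleftrightarrow> epi A d \<and>
     (\<forall>h\<in>hom A (Dom A d) (Dom A d). \<exists>\<beta>\<in>hom A (Cod A d) (Cod A d). Cp A d h = Cp A \<beta> d)"

text \<open>Parenthetical convention: flag st = True gives the "strongly"/"fully (co)invariant" version.\<close>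
definition sec_st :: "('o, 'm) cat \<Rightarrow> bool \<Rightarrow> 'm \<Rightarrow> bool" where
  "sec_st A st s \<longleftrightarrow> is_section A s \<and> (st \<longrightarrow> fully_invariant A s)"

definition ret_st :: "('o, 'm) cat \<Rightarrow> bool \<Rightarrow> 'm \<Rightarrow> bool" where
  "ret_st A st s \<longleftrightarrow> is_retraction A s \<and> (st \<longrightarrow> fully_coinvariant A s)"

definition short_exact :: "('o, 'm) cat \<Rightarrow> 'm \<Rightarrow> 'm \<Rightarrow> bool" where
  "short_exact A i d \<longleftrightarrow> mono A i \<and> epi A d \<and> kernel A d i \<and> cokernel A i d"

definition pullback :: "('o, 'm) cat \<Rightarrow> 'm \<Rightarrow> 'm \<Rightarrow> 'm \<Rightarrow> 'm \<Rightarrow> bool" where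
  "pullback A i g j f \<longleftrightarrow> i \<in> Ar A \<and> g \<in> Ar A \<and> j \<in> Ar A \<and> f \<in> Ar A \<and>
     Cod A i = Cod A g \<and> Dom A j = Dom A f \<and> Cod A j = Dom A g \<and> Cod A f = Dom A i \<and>
     Cp A g j = Cp A i f \<and>
     (\<forall>x\<in>Ar A. \<forall>y\<in>Ar A. Dom A x = Dom A y \<and> Cod A x = Dom A g \<and> Cod A y = Dom A i \<and>
        Cp A g x = Cp A i y \<longrightarrow>
        (\<exists>!u. u \<in> hom A (Dom A x) (Dom A j) \<and> Cp A j u = x \<and> Cp A f u = y))"

definition pushout :: "('o, 'm) cat \<Rightarrow> 'm \<Rightarrow> 'm \<Rightarrow> 'm \<Rightarrow> 'm \<Rightarrow> bool" where
  "pushout A d g p h \<longleftrightarrow> d \<in> Ar A \<and> g \<in> Ar A \<and> p \<in> Ar A \<and> h \<in> Ar A \<and>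
     Dom A d = Dom A g \<and> Cod A p = Cod A h \<and> Dom A p = Cod A g \<and> Dom A h = Cod A d \<and>
     Cp A p g = Cp A h d \<and>
     (\<forall>x\<in>Ar A. \<forall>y\<in>Ar A. Cod A x = Cod A y \<and> Dom A x = Cod A g \<and> Dom A y = Cod A d \<and>
        Cp A x g = Cp A y d \<longrightarrow>
        (\<exists>!u. u \<in> hom A (Cod A p) (Cod A x) \<and> Cp A u p = x \<and> Cp A u h = y))"

definition self_F_split :: "('o, 'm) cat \<Rightarrow> bool \<Rightarrow> 'm \<Rightarrow> bool" where
  "self_F_split A st i \<longleftrightarrow>
     (\<forall>g\<in>hom A (Cod A i) (Cod A i). \<forall>j f. pullback A i g j f \<longrightarrow> sec_st A st j)"

definition dual_self_F_split :: "('o, 'm) cat \<Rightarrow> bool \<Rightarrow> 'm \<Rightarrow> bool" where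
  "dual_self_F_split A st d \<longleftrightarrow>
     (\<forall>g\<in>hom A (Dom A d) (Dom A d). \<forall>p h. pushout A d g p h \<longrightarrow> ret_st A st p)"

definition self_rickart :: "('o, 'm) cat \<Rightarrow> bool \<Rightarrow> 'o \<Rightarrow> bool" where
  "self_rickart A st M \<longleftrightarrow> (\<forall>f\<in>hom A M M. \<forall>k. kernel A f k \<longrightarrow> sec_st A st k)"

definition dual_self_rickart :: "('o, 'm) cat \<Rightarrow> bool \<Rightarrow> 'o \<Rightarrow> bool" where
  "dual_self_rickart A st M \<longleftrightarrow> (\<forall>f\<in>hom A M M. \<forall>c. cokernel A f c \<longrightarrow> ret_st A st c)"

definition kernel_comparison_sections :: "('o, 'm) cat \<Rightarrow> bool \<Rightarrow> 'm \<Rightarrow> bool" where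
  "kernel_comparison_sections A st i \<longleftrightarrow>
     (\<forall>g\<in>hom A (Cod A i) (Cod A i). \<forall>j f k l.
        pullback A i g j f \<and> kernel A g k \<and> l \<in> hom A (Dom A k) (Dom A j) \<and> Cp A j l = k
        \<longrightarrow> sec_st A st l)"

definition cokernel_comparison_retractions :: "('o, 'm) cat \<Rightarrow> bool \<Rightarrow> 'm \<Rightarrow> bool" where
  "cokernel_comparison_retractions A st d \<longleftrightarrow>
     (\<forall>g\<in>hom A (Dom A d) (Dom A d). \<forall>p h c q.
        pushout A d g p h \<and> cokernel A g c \<and> q \<in> hom A (Cod A p) (Cod A c) \<and> Cp A q p = c
        \<longrightarrow> ret_st A st q)"

end

theory Submission
  imports Defs
begin

(* For a short exact sequence 0 \<rightarrow> F \<rightarrow> M \<rightarrow> C \<rightarrow> 0 with maps i and d, the pullback of i along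
   g : M \<rightarrow> M is a kernel of d g. Pulling back along the identity shows that self-F-splitness
   makes i a section, so the sequence splits and M is F \<oplus> C; and a kernel k of g factors as
   k = j l through the pullback j, so it is a section as soon as j and l are. Conversely, a
   splitting yields a section \<sigma> : C \<rightarrow> M, the pullback along g is then a kernel of the
   endomorphism \<sigma> d g and hence a section by self-Rickartness, and l is a section because
   k = j l is. Part (2) is part (1) in the opposite category, where products become coproducts;
   in an abelian category a coproduct of C and F is also a product of F and C. *)

definition op_cat :: "('o, 'm) cat \<Rightarrow> ('o, 'm) cat" where
  "op_cat A = \<lparr>Ob = Ob A, Ar = Ar A, Dom = Cod A, Cod = Dom A, Cp = (\<lambda>g f. Cp A f g), Id = Id A\<rparr>"

lemma op_cat_simps [simp]:
  "Ob (op_cat A) = Ob A" "Ar (op_cat A) = Ar A" "Dom (op_cat A) = Cod A" "Cod (op_cat A) = Dom A"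
  "Cp (op_cat A) g f = Cp A f g" "Id (op_cat A) = Id A"
  by (simp_all add: op_cat_def)

lemma op_op_cat [simp]: "op_cat (op_cat A) = (A :: ('o, 'm) cat)"
  by (simp add: op_cat_def)

lemma hom_op [simp]: "hom (op_cat A) a b = hom A b a"
  by (auto simp: hom_def)

lemma category_op [simp]: "category (op_cat A) \<longleftrightarrow> category A"
  unfolding category_def by (auto simp: hom_def)

lemma mono_op [simp]: "mono (op_cat A) m \<longleftrightarrow> epi A m"
  by (simp add: mono_def epi_def)

lemma epi_op [simp]: "epi (op_cat A) m \<longleftrightarrow> mono A m"
  by (simp add: mono_def epi_def)

lemma zero_obj_op [simp]: "zero_obj (op_cat A) z \<longleftrightarrow> zero_obj A z"
  by (auto simp: zero_obj_def)

lemma zero_mor_op [simp]: "zero_mor (op_cat A) f \<longleftrightarrow> zero_mor A f"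
  unfolding zero_mor_def by auto

(* Stated as equations of functions so that they also rewrite partial applications such as
   Ex (kernel (op_cat A) f) in the definition of abelian. *)
lemma kernel_op [simp]: "kernel (op_cat A) f = cokernel A f"
  by (simp add: kernel_def cokernel_def fun_eq_iff)

lemma cokernel_op [simp]: "cokernel (op_cat A) f = kernel A f"
  by (simp add: kernel_def cokernel_def fun_eq_iff)

lemma product_op [simp]: "product (op_cat A) p q \<longleftrightarrow> coproduct A p q"
  by (simp add: product_def coproduct_def)

lemma coproduct_op [simp]: "coproduct (op_cat A) p q \<longleftrightarrow> product A p q"
  by (simp add: product_def coproduct_def)

lemma abelian_op [simp]: "abelian (op_cat A) \<longleftrightarrow> abelian A"
  unfolding abelian_def by auto

lemma iso_op [simp]: "iso (op_cat A) f \<longleftrightarrow> iso A f"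
  unfolding iso_def by auto

lemma isomorphic_op [simp]: "isomorphic (op_cat A) a b \<longleftrightarrow> isomorphic A b a"
  by (simp add: isomorphic_def)

lemma is_section_op [simp]: "is_section (op_cat A) s \<longleftrightarrow> is_retraction A s"
  by (simp add: is_section_def is_retraction_def)

lemma fully_invariant_op [simp]: "fully_invariant (op_cat A) s \<longleftrightarrow> fully_coinvariant A s"
  by (simp add: fully_invariant_def fully_coinvariant_def)

lemma sec_st_op [simp]: "sec_st (op_cat A) st s \<longleftrightarrow> ret_st A st s"
  by (simp add: sec_st_def ret_st_def)

lemma short_exact_op [simp]: "short_exact (op_cat A) d i \<longleftrightarrow> short_exact A i d"
  by (auto simp: short_exact_def)

lemma pullback_op [simp]: "pullback (op_cat A) d g p h \<longleftrightarrow> pushout A d g p h"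
  by (simp add: pullback_def pushout_def)

lemma self_F_split_op [simp]: "self_F_split (op_cat A) st d \<longleftrightarrow> dual_self_F_split A st d"
  by (simp add: self_F_split_def dual_self_F_split_def)

lemma self_rickart_op [simp]: "self_rickart (op_cat A) st M \<longleftrightarrow> dual_self_rickart A st M"
  by (simp add: self_rickart_def dual_self_rickart_def)

lemma kernel_comparison_sections_op [simp]:
  "kernel_comparison_sections (op_cat A) st d \<longleftrightarrow> cokernel_comparison_retractions A st d"
  by (simp add: kernel_comparison_sections_def cokernel_comparison_retractions_def)

locale abelian_category =
  fixes A :: "('o, 'm) cat"
  assumes abelian: "abelian A"
begin

abbreviation comp (infixl "\<cdot>" 55) where "g \<cdot> f \<equiv> Cp A g f"

lemma op_abelian_category: "abelian_category (op_cat A)"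
  using abelian by unfold_locales simp

lemma category: "category A"
  using abelian by (simp add: abelian_def)

lemma in_hom_iff: "f \<in> hom A a b \<longleftrightarrow> f \<in> Ar A \<and> Dom A f = a \<and> Cod A f = b"
  by (simp add: hom_def)

lemma in_hom_Dom_Cod: "f \<in> Ar A \<Longrightarrow> f \<in> hom A (Dom A f) (Cod A f)"
  by (simp add: hom_def)

lemma Ob_if_in_hom:
  assumes "f \<in> hom A a b" shows "a \<in> Ob A" "b \<in> Ob A"
  using assms category by (auto simp: category_def hom_def)

lemma id_in_hom: "a \<in> Ob A \<Longrightarrow> Id A a \<in> hom A a a"
  using category by (simp add: category_def)

lemma comp_in_hom: "f \<in> hom A a b \<Longrightarrow> g \<in> hom A b c \<Longrightarrow> g \<cdot> f \<in> hom A a c"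
  using category unfolding category_def hom_def by auto

lemma comp_id_left: "f \<in> hom A a b \<Longrightarrow> Id A b \<cdot> f = f"
  using category unfolding category_def hom_def by auto

lemma comp_id_right: "f \<in> hom A a b \<Longrightarrow> f \<cdot> Id A a = f"
  using category unfolding category_def hom_def by auto

lemma comp_assoc:
  "f \<in> hom A a b \<Longrightarrow> g \<in> hom A b c \<Longrightarrow> h \<in> hom A c d \<Longrightarrow> h \<cdot> (g \<cdot> f) = (h \<cdot> g) \<cdot> f"
  using category unfolding category_def hom_def by auto

lemma mono_in_hom: "mono A m \<Longrightarrow> m \<in> hom A (Dom A m) (Cod A m)"
  by (simp add: mono_def hom_def)

lemma mono_cancel:
  assumes "mono A m" "x \<in> hom A X (Dom A m)" "y \<in> hom A X (Dom A m)" "m \<cdot> x = m \<cdot> y"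
  shows "x = y"
  using assms unfolding mono_def hom_def by auto

lemma monoI:
  assumes "m \<in> Ar A"
    and "\<And>x y X. x \<in> hom A X (Dom A m) \<Longrightarrow> y \<in> hom A X (Dom A m) \<Longrightarrow> m \<cdot> x = m \<cdot> y \<Longrightarrow> x = y"
  shows "mono A m"
  using assms unfolding mono_def hom_def by auto

lemma epi_cancel:
  assumes "epi A e" "x \<in> hom A (Cod A e) Y" "y \<in> hom A (Cod A e) Y" "x \<cdot> e = y \<cdot> e"
  shows "x = y"
  using abelian_category.mono_cancel[OF op_abelian_category, of e x Y y] assms by simp


lemma zero_morI:
  assumes "zero_obj A z" "u \<in> hom A a z" "v \<in> hom A z b"
  shows "zero_mor A (v \<cdot> u)"
proof -
  have "v \<cdot> u \<in> hom A a b"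
    using comp_in_hom[OF assms(2,3)] .
  then show ?thesis
    unfolding zero_mor_def using assms
    by (intro conjI exI[of _ z] exI[of _ u] exI[of _ v]) (auto simp: in_hom_iff)
qed

lemma zero_morE:
  assumes "zero_mor A f"
  obtains z u v where "zero_obj A z" "u \<in> hom A (Dom A f) z" "v \<in> hom A z (Cod A f)" "f = v \<cdot> u"
  using assms unfolding zero_mor_def in_hom_iff by blast

lemma zero_mor_comp_left:
  assumes "zero_mor A f" "h \<in> hom A (Cod A f) c"
  shows "zero_mor A (h \<cdot> f)"
proof -
  obtain z u v where z: "zero_obj A z" "u \<in> hom A (Dom A f) z" "v \<in> hom A z (Cod A f)" "f = v \<cdot> u"
    using assms(1) by (rule zero_morE)
  have "h \<cdot> f = (h \<cdot> v) \<cdot> u"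
    using z(4) comp_assoc[OF z(2,3) assms(2)] by simp
  then show ?thesis
    using zero_morI[OF z(1,2) comp_in_hom[OF z(3) assms(2)]] by simp
qed

lemma zero_mor_comp_right:
  assumes "zero_mor A f" "g \<in> hom A a (Dom A f)"
  shows "zero_mor A (f \<cdot> g)"
  using abelian_category.zero_mor_comp_left[OF op_abelian_category, of f g] assms by simp

lemma zero_obj_arrow_in_unique:
  assumes "zero_obj A z" "f \<in> hom A a z" "g \<in> hom A a z"
  shows "f = g"
proof -
  have "\<exists>!f. f \<in> hom A a z"
    using assms(1) Ob_if_in_hom(1)[OF assms(2)] unfolding zero_obj_def by blast
  then show ?thesis
    using assms(2,3) by blast
qed

lemma zero_obj_arrow_out_unique:
  assumes "zero_obj A z" "f \<in> hom A z a" "g \<in> hom A z a"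
  shows "f = g"
  using abelian_category.zero_obj_arrow_in_unique[OF op_abelian_category, of z f a g] assms by simp

lemma zero_mor_unique:
  assumes "zero_mor A f" "zero_mor A g" "Dom A f = Dom A g" "Cod A f = Cod A g"
  shows "f = g"
proof -
  obtain z u v where z: "zero_obj A z" "u \<in> hom A (Dom A f) z" "v \<in> hom A z (Cod A f)" "f = v \<cdot> u"
    using assms(1) by (rule zero_morE)
  obtain z' u' v' where z': "zero_obj A z'" "u' \<in> hom A (Dom A f) z'" "v' \<in> hom A z' (Cod A f)"
    "g = v' \<cdot> u'"
    using assms(2) unfolding assms(3,4) by (rule zero_morE)
  have "\<exists>!w. w \<in> hom A z z'"
    using z(1) z'(1) unfolding zero_obj_def by simp
  then obtain w where w: "w \<in> hom A z z'"
    by blast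
  have "g = v' \<cdot> (w \<cdot> u)"
    using z'(4) zero_obj_arrow_in_unique[OF z'(1) z'(2) comp_in_hom[OF z(2) w]] by simp
  also have "\<dots> = (v' \<cdot> w) \<cdot> u"
    using comp_assoc[OF z(2) w z'(3)] .
  also have "\<dots> = f"
    using z(4) zero_obj_arrow_out_unique[OF z(1) comp_in_hom[OF w z'(3)] z(3)] by simp
  finally show ?thesis ..
qed

lemma zero_mor_exists:
  assumes "a \<in> Ob A" "b \<in> Ob A"
  obtains z where "z \<in> hom A a b" "zero_mor A z"
proof -
  obtain o0 where "zero_obj A o0"
    using abelian by (auto simp: abelian_def)
  moreover have "\<exists>!u. u \<in> hom A a o0" "\<exists>!v. v \<in> hom A o0 b"
    using calculation assms unfolding zero_obj_def by simp_all
  ultimately show ?thesis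
    using that zero_morI comp_in_hom by metis
qed

lemma zero_mor_if_mono_comp:
  assumes "mono A m" "x \<in> hom A X (Dom A m)" "zero_mor A (m \<cdot> x)"
  shows "zero_mor A x"
proof -
  have m: "m \<in> hom A (Dom A m) (Cod A m)"
    using mono_in_hom[OF assms(1)] .
  obtain z where z: "z \<in> hom A X (Dom A m)" "zero_mor A z"
    using zero_mor_exists Ob_if_in_hom[OF assms(2)] by metis
  have "m \<cdot> x = m \<cdot> z"
    using zero_mor_unique[OF assms(3) zero_mor_comp_left[OF z(2)]] comp_in_hom[OF assms(2) m]
      comp_in_hom[OF z(1) m] m z(1) by (simp add: in_hom_iff)
  then show ?thesis
    using mono_cancel[OF assms(1,2) z(1)] z(2) by simp
qed

lemma zero_mor_if_epi_comp:
  assumes "epi A e" "x \<in> hom A (Cod A e) Y" "zero_mor A (x \<cdot> e)"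
  shows "zero_mor A x"
  using abelian_category.zero_mor_if_mono_comp[OF op_abelian_category, of e x Y] assms by simp


lemma kernel_in_hom: "kernel A f k \<Longrightarrow> k \<in> hom A (Dom A k) (Dom A f)"
  by (simp add: kernel_def hom_def)

lemma kernel_zero: "kernel A f k \<Longrightarrow> zero_mor A (f \<cdot> k)"
  by (simp add: kernel_def)

lemma kernel_factor:
  assumes "kernel A f k" "x \<in> hom A X (Dom A f)" "zero_mor A (f \<cdot> x)"
  shows "\<exists>!u. u \<in> hom A X (Dom A k) \<and> k \<cdot> u = x"
proof -
  have universal: "\<forall>x\<in>Ar A. Cod A x = Dom A f \<and> zero_mor A (f \<cdot> x) \<longrightarrow>
      (\<exists>!u. u \<in> hom A (Dom A x) (Dom A k) \<and> k \<cdot> u = x)"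
    using assms(1) unfolding kernel_def by (elim conjE)
  show ?thesis
    using universal[rule_format, of x] assms(2,3) unfolding in_hom_iff by simp
qed

lemma kernelI:
  assumes "f \<in> Ar A" "k \<in> Ar A" "Cod A k = Dom A f" "zero_mor A (f \<cdot> k)"
    and "\<And>x X. x \<in> hom A X (Dom A f) \<Longrightarrow> zero_mor A (f \<cdot> x) \<Longrightarrow>
      \<exists>!u. u \<in> hom A X (Dom A k) \<and> k \<cdot> u = x"
  shows "kernel A f k"
  unfolding kernel_def
proof (intro conjI ballI impI)
  fix x
  assume "x \<in> Ar A" "Cod A x = Dom A f \<and> zero_mor A (f \<cdot> x)"
  then show "\<exists>!u. u \<in> hom A (Dom A x) (Dom A k) \<and> k \<cdot> u = x"
    using assms(5)[of x "Dom A x"] by (simp add: in_hom_iff)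
qed (use assms in auto)

lemma kernel_mono:
  assumes "kernel A f k"
  shows "mono A k"
proof (rule monoI)
  have k: "k \<in> hom A (Dom A k) (Dom A f)"
    using kernel_in_hom[OF assms] .
  then show "k \<in> Ar A"
    by (simp add: in_hom_iff)
  fix x y X
  assume x: "x \<in> hom A X (Dom A k)" and y: "y \<in> hom A X (Dom A k)" and eq: "k \<cdot> x = k \<cdot> y"
  have f: "f \<in> hom A (Dom A f) (Cod A f)"
    using assms by (simp add: kernel_def hom_def)
  have "zero_mor A ((f \<cdot> k) \<cdot> x)"
    using zero_mor_comp_right[OF kernel_zero[OF assms]] x comp_in_hom[OF k f]
    by (simp add: in_hom_iff)
  then have "zero_mor A (f \<cdot> (k \<cdot> x))"
    using comp_assoc[OF x k f] by simp
  then have "\<exists>!u. u \<in> hom A X (Dom A k) \<and> k \<cdot> u = k \<cdot> x"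
    using kernel_factor[OF assms comp_in_hom[OF x k]] by simp
  then show "x = y"
    using x y eq by (elim ex1E) metis
qed

lemma cokernel_in_hom: "cokernel A f c \<Longrightarrow> c \<in> hom A (Cod A f) (Cod A c)"
  using abelian_category.kernel_in_hom[OF op_abelian_category] by simp

lemma cokernel_zero: "cokernel A f c \<Longrightarrow> zero_mor A (c \<cdot> f)"
  using abelian_category.kernel_zero[OF op_abelian_category] by simp

lemma cokernel_factor:
  assumes "cokernel A f c" "x \<in> hom A (Cod A f) Y" "zero_mor A (x \<cdot> f)"
  shows "\<exists>!u. u \<in> hom A (Cod A c) Y \<and> u \<cdot> c = x"
  using abelian_category.kernel_factor[OF op_abelian_category, of f c x Y] assms by simp

lemma cokernelI:
  assumes "f \<in> Ar A" "c \<in> Ar A" "Dom A c = Cod A f" "zero_mor A (c \<cdot> f)"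
    and "\<And>x Y. x \<in> hom A (Cod A f) Y \<Longrightarrow> zero_mor A (x \<cdot> f) \<Longrightarrow>
      \<exists>!u. u \<in> hom A (Cod A c) Y \<and> u \<cdot> c = x"
  shows "cokernel A f c"
  using abelian_category.kernelI[OF op_abelian_category, of f c] assms by simp

lemma cokernel_epi: "cokernel A f c \<Longrightarrow> epi A c"
  using abelian_category.kernel_mono[OF op_abelian_category] by simp

lemma kernel_exists: "f \<in> Ar A \<Longrightarrow> \<exists>k. kernel A f k"
  using abelian by (simp add: abelian_def)

lemma mono_is_kernel: "mono A m \<Longrightarrow> \<exists>f. kernel A f m"
  using abelian by (simp add: abelian_def)

lemma epi_is_cokernel: "epi A e \<Longrightarrow> \<exists>f. cokernel A f e"
  using abelian by (simp add: abelian_def)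

lemma is_sectionI: "s \<in> hom A a b \<Longrightarrow> t \<in> hom A b a \<Longrightarrow> t \<cdot> s = Id A a \<Longrightarrow> is_section A s"
  unfolding is_section_def by (auto simp: in_hom_iff intro!: bexI[of _ t])

lemma is_sectionE:
  assumes "is_section A s"
  obtains t where "t \<in> hom A (Cod A s) (Dom A s)" "t \<cdot> s = Id A (Dom A s)"
  using assms unfolding is_section_def by blast

lemma section_mono:
  assumes "is_section A s"
  shows "mono A s"
proof (rule monoI)
  show s_ar: "s \<in> Ar A"
    using assms by (simp add: is_section_def)
  then have s: "s \<in> hom A (Dom A s) (Cod A s)"
    by (rule in_hom_Dom_Cod)
  obtain t where t: "t \<in> hom A (Cod A s) (Dom A s)" "t \<cdot> s = Id A (Dom A s)"
    using assms by (rule is_sectionE)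
  fix x y X
  assume x: "x \<in> hom A X (Dom A s)" and y: "y \<in> hom A X (Dom A s)" and eq: "s \<cdot> x = s \<cdot> y"
  have "x = (t \<cdot> s) \<cdot> x"
    using t(2) comp_id_left[OF x] by simp
  also have "\<dots> = (t \<cdot> s) \<cdot> y"
    using comp_assoc[OF x s t(1)] comp_assoc[OF y s t(1)] eq by simp
  also have "\<dots> = y"
    using t(2) comp_id_left[OF y] by simp
  finally show "x = y" .
qed

lemma is_retractionI: "s \<in> hom A a b \<Longrightarrow> t \<in> hom A b a \<Longrightarrow> s \<cdot> t = Id A b \<Longrightarrow> is_retraction A s"
  using abelian_category.is_sectionI[OF op_abelian_category, of s b a t] by simp

lemma retraction_epi: "is_retraction A s \<Longrightarrow> epi A s"
  using abelian_category.section_mono[OF op_abelian_category] by simp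

lemma product_in_hom:
  assumes "product A p1 p2"
  shows "p1 \<in> hom A (Dom A p1) (Cod A p1)" "p2 \<in> hom A (Dom A p1) (Cod A p2)"
  using assms by (simp_all add: product_def hom_def)

lemma product_factor:
  assumes "product A p1 p2" "x \<in> hom A X (Cod A p1)" "y \<in> hom A X (Cod A p2)"
  shows "\<exists>!u. u \<in> hom A X (Dom A p1) \<and> p1 \<cdot> u = x \<and> p2 \<cdot> u = y"
proof -
  have universal: "\<forall>x\<in>Ar A. \<forall>y\<in>Ar A. Dom A x = Dom A y \<and> Cod A x = Cod A p1 \<and> Cod A y = Cod A p2 \<longrightarrow>
      (\<exists>!u. u \<in> hom A (Dom A x) (Dom A p1) \<and> p1 \<cdot> u = x \<and> p2 \<cdot> u = y)"
    using assms(1) unfolding product_def by (elim conjE)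
  show ?thesis
    using universal[rule_format, of x y] assms(2,3) unfolding in_hom_iff by simp
qed

lemma product_eqI:
  assumes "product A p1 p2" "u \<in> hom A X (Dom A p1)" "v \<in> hom A X (Dom A p1)"
    and "p1 \<cdot> u = p1 \<cdot> v" "p2 \<cdot> u = p2 \<cdot> v"
  shows "u = v"
proof -
  have "\<exists>!w. w \<in> hom A X (Dom A p1) \<and> p1 \<cdot> w = p1 \<cdot> u \<and> p2 \<cdot> w = p2 \<cdot> u"
    using product_factor[OF assms(1) comp_in_hom[OF assms(2) product_in_hom(1)[OF assms(1)]]
        comp_in_hom[OF assms(2) product_in_hom(2)[OF assms(1)]]] .
  then show ?thesis
    using assms(2-5) by (elim ex1E) metis
qed

lemma product_exists:
  assumes "a \<in> Ob A" "b \<in> Ob A"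
  obtains p1 p2 where "product A p1 p2" "Cod A p1 = a" "Cod A p2 = b"
proof -
  have "\<forall>a\<in>Ob A. \<forall>b\<in>Ob A. \<exists>p1 p2. product A p1 p2 \<and> Cod A p1 = a \<and> Cod A p2 = b"
    using abelian unfolding abelian_def by (elim conjE)
  then show ?thesis
    using assms that by blast
qed

lemma epiI:
  assumes "e \<in> Ar A"
    and "\<And>x y Y. x \<in> hom A (Cod A e) Y \<Longrightarrow> y \<in> hom A (Cod A e) Y \<Longrightarrow> x \<cdot> e = y \<cdot> e \<Longrightarrow> x = y"
  shows "epi A e"
  using abelian_category.monoI[OF op_abelian_category, of e] assms by simp

lemma kernel_factorE:
  assumes "kernel A f k" "x \<in> hom A X (Dom A f)" "zero_mor A (f \<cdot> x)"
  obtains u where "u \<in> hom A X (Dom A k)" "k \<cdot> u = x"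
  using ex1_implies_ex[OF kernel_factor[OF assms]] by blast

lemma cokernel_factorE:
  assumes "cokernel A f c" "x \<in> hom A (Cod A f) Y" "zero_mor A (x \<cdot> f)"
  obtains u where "u \<in> hom A (Cod A c) Y" "u \<cdot> c = x"
  using ex1_implies_ex[OF cokernel_factor[OF assms]] by blast

lemma product_factorE:
  assumes "product A p1 p2" "x \<in> hom A X (Cod A p1)" "y \<in> hom A X (Cod A p2)"
  obtains u where "u \<in> hom A X (Dom A p1)" "p1 \<cdot> u = x" "p2 \<cdot> u = y"
  using ex1_implies_ex[OF product_factor[OF assms]] by blast

lemma isoI:
  "f \<in> hom A a b \<Longrightarrow> g \<in> hom A b a \<Longrightarrow> g \<cdot> f = Id A a \<Longrightarrow> f \<cdot> g = Id A b \<Longrightarrow> iso A f"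
  unfolding iso_def by (auto simp: in_hom_iff intro!: bexI[of _ g])

lemma isoE:
  assumes "iso A f"
  obtains g where "g \<in> hom A (Cod A f) (Dom A f)" "g \<cdot> f = Id A (Dom A f)" "f \<cdot> g = Id A (Cod A f)"
  using assms unfolding iso_def by blast

lemma diagonal_exists:
  assumes Y: "Y \<in> Ob A"
  obtains p1 p2 \<Delta> where "product A p1 p2" "Cod A p1 = Y" "Cod A p2 = Y"
    "\<Delta> \<in> hom A Y (Dom A p1)" "p1 \<cdot> \<Delta> = Id A Y" "p2 \<cdot> \<Delta> = Id A Y"
proof -
  obtain p1 p2 where P: "product A p1 p2" "Cod A p1 = Y" "Cod A p2 = Y"
    using product_exists[OF Y Y] .
  then show ?thesis
    using that product_factorE[OF P(1), of "Id A Y" Y "Id A Y"] id_in_hom[OF Y] by metis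
qed

lemma epi_if_zero_cancel_right:
  assumes f: "f \<in> hom A a b"
    and cancel: "\<And>t Y. t \<in> hom A b Y \<Longrightarrow> zero_mor A (t \<cdot> f) \<Longrightarrow> zero_mor A t"
  shows "epi A f"
proof (rule epiI)
  show "f \<in> Ar A"
    using f by (simp add: in_hom_iff)
  fix x y Y
  assume "x \<in> hom A (Cod A f) Y" "y \<in> hom A (Cod A f) Y" and eq: "x \<cdot> f = y \<cdot> f"
  then have x: "x \<in> hom A b Y" and y: "y \<in> hom A b Y"
    using f by (simp_all add: in_hom_iff)
  obtain p1 p2 \<Delta> where P: "product A p1 p2" "Cod A p1 = Y" "Cod A p2 = Y"
    and \<Delta>: "\<Delta> \<in> hom A Y (Dom A p1)" "p1 \<cdot> \<Delta> = Id A Y" "p2 \<cdot> \<Delta> = Id A Y"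
    using diagonal_exists[OF Ob_if_in_hom(2)[OF x]] .
  have p: "p1 \<in> hom A (Dom A p1) Y" "p2 \<in> hom A (Dom A p1) Y"
    using product_in_hom[OF P(1)] P by simp_all
  obtain c where c: "kernel A c \<Delta>"
    using mono_is_kernel[OF section_mono[OF is_sectionI[OF \<Delta>(1) p(1) \<Delta>(2)]]] ..
  have c_hom: "c \<in> hom A (Dom A p1) (Cod A c)"
    using kernel_in_hom[OF c] \<Delta>(1) c by (simp add: kernel_def in_hom_iff)
  obtain g where g: "g \<in> hom A b (Dom A p1)" "p1 \<cdot> g = x" "p2 \<cdot> g = y"
    using product_factorE[OF P(1), of x b y] x y P by auto
  have xf: "x \<cdot> f \<in> hom A a Y"
    using comp_in_hom[OF f x] .
  \<comment> \<open>the pair (x, y) agrees with the diagonal after f, so c kills it on f and it factors through \<Delta>\<close>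
  have "g \<cdot> f = \<Delta> \<cdot> (x \<cdot> f)"
  proof (rule product_eqI[OF P(1)])
    show "g \<cdot> f \<in> hom A a (Dom A p1)" "\<Delta> \<cdot> (x \<cdot> f) \<in> hom A a (Dom A p1)"
      using comp_in_hom[OF f g(1)] comp_in_hom[OF xf \<Delta>(1)] by simp_all
    show "p1 \<cdot> (g \<cdot> f) = p1 \<cdot> (\<Delta> \<cdot> (x \<cdot> f))" "p2 \<cdot> (g \<cdot> f) = p2 \<cdot> (\<Delta> \<cdot> (x \<cdot> f))"
      using comp_assoc[OF f g(1) p(1)] comp_assoc[OF f g(1) p(2)] comp_assoc[OF xf \<Delta>(1) p(1)]
        comp_assoc[OF xf \<Delta>(1) p(2)] g \<Delta> comp_id_left[OF xf] eq by simp_all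
  qed
  then have "(c \<cdot> g) \<cdot> f = (c \<cdot> \<Delta>) \<cdot> (x \<cdot> f)"
    using comp_assoc[OF f g(1) c_hom] comp_assoc[OF xf \<Delta>(1) c_hom] by simp
  moreover have "zero_mor A ((c \<cdot> \<Delta>) \<cdot> (x \<cdot> f))"
    using zero_mor_comp_right[OF kernel_zero[OF c]] xf comp_in_hom[OF \<Delta>(1) c_hom]
    by (simp add: in_hom_iff)
  ultimately have "zero_mor A (c \<cdot> g)"
    using cancel comp_in_hom[OF g(1) c_hom] by simp
  then obtain v where v: "v \<in> hom A b Y" "\<Delta> \<cdot> v = g"
    using kernel_factorE[OF c, of g b] g(1) \<Delta>(1) c_hom by (auto simp: in_hom_iff)
  have "x = (p1 \<cdot> \<Delta>) \<cdot> v" "y = (p2 \<cdot> \<Delta>) \<cdot> v"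
    using g v comp_assoc[OF v(1) \<Delta>(1) p(1)] comp_assoc[OF v(1) \<Delta>(1) p(2)] by simp_all
  then show "x = y"
    using \<Delta>(2,3) by simp
qed

lemma mono_if_zero_cancel_left:
  assumes "f \<in> hom A a b"
    and "\<And>x X. x \<in> hom A X a \<Longrightarrow> zero_mor A (f \<cdot> x) \<Longrightarrow> zero_mor A x"
  shows "mono A f"
  using abelian_category.epi_if_zero_cancel_right[OF op_abelian_category, of f b a] assms by simp

lemma iso_if_mono_epi:
  assumes mono: "mono A f" and epi: "epi A f"
  shows "iso A f"
proof -
  define a b where "a = Dom A f" and "b = Cod A f"
  have f: "f \<in> hom A a b"
    using mono_in_hom[OF mono] a_def b_def by simp
  obtain g where g: "cokernel A g f"
    using epi_is_cokernel[OF epi] ..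
  have g_hom: "g \<in> hom A (Dom A g) a"
    using cokernel_in_hom[OF g] g a_def by (simp add: cokernel_def in_hom_iff)
  have "zero_mor A g"
    using zero_mor_if_mono_comp[OF mono _ cokernel_zero[OF g]] g_hom a_def by simp
  then have "zero_mor A (Id A a \<cdot> g)"
    using comp_id_left[OF g_hom] by simp
  then obtain u where u: "u \<in> hom A b a" "u \<cdot> f = Id A a"
    using cokernel_factorE[OF g, of "Id A a" a] id_in_hom[OF Ob_if_in_hom(1)[OF f]] g_hom b_def
    by (auto simp: in_hom_iff)
  have "(f \<cdot> u) \<cdot> f = Id A b \<cdot> f"
    using comp_assoc[OF f u(1) f] u(2) comp_id_right[OF f] comp_id_left[OF f] by simp
  then have "f \<cdot> u = Id A b"
    using epi_cancel[OF epi] comp_in_hom[OF u(1) f] id_in_hom[OF Ob_if_in_hom(2)[OF f]] b_def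
    by simp
  then show ?thesis
    using isoI[OF f u(1) u(2)] by simp
qed

lemma isomorphic_sym:
  assumes "isomorphic A a b"
  shows "isomorphic A b a"
proof -
  obtain f where f: "f \<in> hom A a b" "iso A f"
    using assms unfolding isomorphic_def ..
  obtain g where "g \<in> hom A b a" "g \<cdot> f = Id A a" "f \<cdot> g = Id A b"
    using isoE[OF f(2)] f(1) by (auto simp: in_hom_iff)
  then show ?thesis
    unfolding isomorphic_def using isoI f(1) by blast
qed

lemma isomorphic_trans:
  assumes "isomorphic A a b" "isomorphic A b c"
  shows "isomorphic A a c"
proof -
  obtain f g where f: "f \<in> hom A a b" "iso A f" and g: "g \<in> hom A b c" "iso A g"
    using assms unfolding isomorphic_def by blast
  obtain f' where f': "f' \<in> hom A b a" "f' \<cdot> f = Id A a" "f \<cdot> f' = Id A b"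
    using isoE[OF f(2)] f(1) by (auto simp: in_hom_iff)
  obtain g' where g': "g' \<in> hom A c b" "g' \<cdot> g = Id A b" "g \<cdot> g' = Id A c"
    using isoE[OF g(2)] g(1) by (auto simp: in_hom_iff)
  have "(f' \<cdot> g') \<cdot> (g \<cdot> f) = Id A a"
    using comp_assoc[OF f(1) g(1) comp_in_hom[OF g'(1) f'(1)]] comp_assoc[OF g(1) g'(1) f'(1)]
      g'(2) comp_id_right[OF f'(1)] f'(2) by simp
  moreover have "(g \<cdot> f) \<cdot> (f' \<cdot> g') = Id A c"
    using comp_assoc[OF g'(1) f'(1) comp_in_hom[OF f(1) g(1)]] comp_assoc[OF f'(1) f(1) g(1)]
      f'(3) comp_id_right[OF g(1)] g'(3) by simp
  ultimately show ?thesis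
    unfolding isomorphic_def
    using isoI comp_in_hom[OF f(1) g(1)] comp_in_hom[OF g'(1) f'(1)] by blast
qed


lemma short_exact_in_hom:
  assumes "short_exact A i d"
  shows "i \<in> hom A (Dom A i) (Cod A i)" "d \<in> hom A (Cod A i) (Cod A d)"
  using assms mono_in_hom cokernel_in_hom by (auto simp: short_exact_def)

lemma product_injections:
  assumes "product A p1 p2"
  obtains \<iota>1 \<iota>2 where
    "\<iota>1 \<in> hom A (Cod A p1) (Dom A p1)" "p1 \<cdot> \<iota>1 = Id A (Cod A p1)" "zero_mor A (p2 \<cdot> \<iota>1)"
    "\<iota>2 \<in> hom A (Cod A p2) (Dom A p1)" "zero_mor A (p1 \<cdot> \<iota>2)" "p2 \<cdot> \<iota>2 = Id A (Cod A p2)"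
proof -
  have obs: "Cod A p1 \<in> Ob A" "Cod A p2 \<in> Ob A"
    using Ob_if_in_hom(2) product_in_hom[OF assms] by blast+
  obtain z12 where "z12 \<in> hom A (Cod A p1) (Cod A p2)" "zero_mor A z12"
    using zero_mor_exists[OF obs] .
  moreover obtain z21 where "z21 \<in> hom A (Cod A p2) (Cod A p1)" "zero_mor A z21"
    using zero_mor_exists[OF obs(2,1)] .
  ultimately show ?thesis
    using that product_factorE[OF assms] id_in_hom[OF obs(1)] id_in_hom[OF obs(2)] by metis
qed

lemma product_factor_through_injection:
  assumes P: "product A p1 p2"
    and \<iota>: "\<iota> \<in> hom A (Cod A p1) (Dom A p1)" "p1 \<cdot> \<iota> = Id A (Cod A p1)" "zero_mor A (p2 \<cdot> \<iota>)"
    and y: "y \<in> hom A X (Dom A p1)" "zero_mor A (p2 \<cdot> y)"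
  shows "y = \<iota> \<cdot> (p1 \<cdot> y)"
proof (rule product_eqI[OF P y(1)])
  note p = product_in_hom[OF P]
  have p1y: "p1 \<cdot> y \<in> hom A X (Cod A p1)"
    using comp_in_hom[OF y(1) p(1)] .
  show "\<iota> \<cdot> (p1 \<cdot> y) \<in> hom A X (Dom A p1)"
    using comp_in_hom[OF p1y \<iota>(1)] .
  show "p1 \<cdot> y = p1 \<cdot> (\<iota> \<cdot> (p1 \<cdot> y))"
    using comp_assoc[OF p1y \<iota>(1) p(1)] \<iota>(2) comp_id_left[OF p1y] by simp
  have "zero_mor A ((p2 \<cdot> \<iota>) \<cdot> (p1 \<cdot> y))"
    using zero_mor_comp_right[OF \<iota>(3)] p1y \<iota>(1) comp_in_hom[OF \<iota>(1) p(2)] by (simp add: in_hom_iff)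
  then show "p2 \<cdot> y = p2 \<cdot> (\<iota> \<cdot> (p1 \<cdot> y))"
    using zero_mor_unique[OF y(2)] comp_assoc[OF p1y \<iota>(1) p(2)] comp_in_hom[OF y(1) p(2)]
      comp_in_hom[OF comp_in_hom[OF p1y \<iota>(1)] p(2)] by (simp add: in_hom_iff)
qed

lemma product_injection_kernel:
  assumes P: "product A p1 p2"
    and \<iota>: "\<iota> \<in> hom A (Cod A p1) (Dom A p1)" "p1 \<cdot> \<iota> = Id A (Cod A p1)" "zero_mor A (p2 \<cdot> \<iota>)"
  shows "kernel A p2 \<iota>"
proof (rule kernelI)
  note p = product_in_hom[OF P]
  show "p2 \<in> Ar A" "\<iota> \<in> Ar A" "Cod A \<iota> = Dom A p2" "zero_mor A (p2 \<cdot> \<iota>)"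
    using p \<iota> by (auto simp: in_hom_iff)
  fix x X
  assume "x \<in> hom A X (Dom A p2)" "zero_mor A (p2 \<cdot> x)"
  then have x: "x \<in> hom A X (Dom A p1)" "zero_mor A (p2 \<cdot> x)"
    using p by (simp_all add: in_hom_iff)
  note x_through = product_factor_through_injection[OF P \<iota> x]
  have mono: "mono A \<iota>"
    using section_mono[OF is_sectionI[OF \<iota>(1) p(1) \<iota>(2)]] .
  show "\<exists>!u. u \<in> hom A X (Dom A \<iota>) \<and> \<iota> \<cdot> u = x"
  proof (rule ex1I[of _ "p1 \<cdot> x"])
    show "p1 \<cdot> x \<in> hom A X (Dom A \<iota>) \<and> \<iota> \<cdot> (p1 \<cdot> x) = x"
      using comp_in_hom[OF x(1) p(1)] x_through \<iota>(1) by (simp add: in_hom_iff)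
    show "v = p1 \<cdot> x" if "v \<in> hom A X (Dom A \<iota>) \<and> \<iota> \<cdot> v = x" for v
      using mono_cancel[OF mono] that comp_in_hom[OF x(1) p(1)] x_through \<iota>(1)
      by (simp add: in_hom_iff)
  qed
qed

lemma product_projection_cokernel:
  assumes P: "product A p1 p2"
    and \<iota>: "\<iota> \<in> hom A (Cod A p1) (Dom A p1)" "p1 \<cdot> \<iota> = Id A (Cod A p1)" "zero_mor A (p2 \<cdot> \<iota>)"
  shows "cokernel A \<iota> p2"
proof -
  note p = product_in_hom[OF P]
  obtain \<iota>2 where "\<iota>2 \<in> hom A (Cod A p2) (Dom A p1)" "p2 \<cdot> \<iota>2 = Id A (Cod A p2)"
    using product_injections[OF P] by metis
  then obtain g where g: "cokernel A g p2"
    using epi_is_cokernel[OF retraction_epi[OF is_retractionI[OF p(2)]]] by blast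
  have g_hom: "g \<in> hom A (Dom A g) (Dom A p1)"
    using cokernel_in_hom[OF g] p g by (simp add: cokernel_def in_hom_iff)
  \<comment> \<open>p2 is a cokernel of some g, and g factors through \<iota>\<close>
  have g_through: "g = \<iota> \<cdot> (p1 \<cdot> g)"
    using product_factor_through_injection[OF P \<iota> g_hom cokernel_zero[OF g]] .
  show ?thesis
  proof (rule cokernelI)
    show "\<iota> \<in> Ar A" "p2 \<in> Ar A" "Dom A p2 = Cod A \<iota>" "zero_mor A (p2 \<cdot> \<iota>)"
      using p \<iota> by (auto simp: in_hom_iff)
    fix x Y
    assume x: "x \<in> hom A (Cod A \<iota>) Y" and zero: "zero_mor A (x \<cdot> \<iota>)"
    have x': "x \<in> hom A (Cod A g) Y"
      using x g_hom \<iota>(1) by (simp add: in_hom_iff)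
    have "x \<cdot> g = (x \<cdot> \<iota>) \<cdot> (p1 \<cdot> g)"
      using g_through comp_assoc[OF comp_in_hom[OF g_hom p(1)] \<iota>(1)] x \<iota>(1)
      by (metis in_hom_iff)
    then have "zero_mor A (x \<cdot> g)"
      using zero_mor_comp_right[OF zero] comp_in_hom[OF g_hom p(1)] \<iota>(1) x
        comp_in_hom[OF \<iota>(1)] by (simp add: in_hom_iff)
    then show "\<exists>!u. u \<in> hom A (Cod A p2) Y \<and> u \<cdot> p2 = x"
      using cokernel_factor[OF g x'] by simp
  qed
qed

lemma product_short_exact:
  assumes P: "product A p1 p2"
    and \<iota>: "\<iota> \<in> hom A (Cod A p1) (Dom A p1)" "p1 \<cdot> \<iota> = Id A (Cod A p1)" "zero_mor A (p2 \<cdot> \<iota>)"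
  shows "short_exact A \<iota> p2"
  using section_mono[OF is_sectionI[OF \<iota>(1) product_in_hom(1)[OF P] \<iota>(2)]]
    cokernel_epi[OF product_projection_cokernel[OF assms]] product_injection_kernel[OF assms]
    product_projection_cokernel[OF assms]
  by (simp add: short_exact_def)

context
  fixes i d r p1 p2 u
  assumes se: "short_exact A i d"
    and r: "r \<in> hom A (Cod A i) (Dom A i)" "r \<cdot> i = Id A (Dom A i)"
    and P: "product A p1 p2" "Cod A p1 = Dom A i" "Cod A p2 = Cod A d"
    and u: "u \<in> hom A (Cod A i) (Dom A p1)" "p1 \<cdot> u = r" "p2 \<cdot> u = d"
begin

lemma split_pairing_mono: "mono A u"
proof (rule mono_if_zero_cancel_left[OF u(1)])
  note i = short_exact_in_hom(1)[OF se] and d = short_exact_in_hom(2)[OF se]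
  have p: "p1 \<in> hom A (Dom A p1) (Dom A i)" "p2 \<in> hom A (Dom A p1) (Cod A d)"
    using product_in_hom[OF P(1)] P(2,3) by simp_all
  have ker: "kernel A d i"
    using se by (simp add: short_exact_def)
  fix x X
  assume x: "x \<in> hom A X (Cod A i)" and zero: "zero_mor A (u \<cdot> x)"
  have "zero_mor A (d \<cdot> x)" "zero_mor A (r \<cdot> x)"
    using zero_mor_comp_left[OF zero, of p2 "Cod A d"] zero_mor_comp_left[OF zero, of p1 "Dom A i"]
      comp_assoc[OF x u(1) p(2)] comp_assoc[OF x u(1) p(1)] u comp_in_hom[OF x u(1)] p P
    by (simp_all add: in_hom_iff)
  moreover obtain y where y: "y \<in> hom A X (Dom A i)" "i \<cdot> y = x"
    using kernel_factorE[OF ker, of x X] calculation(1) x i d by (auto simp: in_hom_iff)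
  moreover have "r \<cdot> x = y"
    using y(2)[symmetric] comp_assoc[OF y(1) i r(1)] r(2) comp_id_left[OF y(1)] by simp
  ultimately show "zero_mor A x"
    using zero_mor_comp_left[of y i "Cod A i"] i by (simp add: in_hom_iff)
qed

lemma split_pairing_epi: "epi A u"
proof (rule epi_if_zero_cancel_right[OF u(1)])
  note i = short_exact_in_hom(1)[OF se] and d = short_exact_in_hom(2)[OF se]
  have p: "p1 \<in> hom A (Dom A p1) (Dom A i)" "p2 \<in> hom A (Dom A p1) (Cod A d)"
    using product_in_hom[OF P(1)] P(2,3) by simp_all
  have ker: "kernel A d i" and d_epi: "epi A d"
    using se by (simp_all add: short_exact_def)
  obtain \<iota> where \<iota>: "\<iota> \<in> hom A (Dom A i) (Dom A p1)" "p1 \<cdot> \<iota> = Id A (Dom A i)" "zero_mor A (p2 \<cdot> \<iota>)"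
    using product_injections[OF P(1)] P by metis
  have u_i: "u \<cdot> i = \<iota>"
  proof (rule product_eqI[OF P(1)])
    show "u \<cdot> i \<in> hom A (Dom A i) (Dom A p1)" "\<iota> \<in> hom A (Dom A i) (Dom A p1)"
      using comp_in_hom[OF i u(1)] \<iota>(1) by simp_all
    show "p1 \<cdot> (u \<cdot> i) = p1 \<cdot> \<iota>"
      using comp_assoc[OF i u(1) p(1)] u(2) r(2) \<iota>(2) by simp
    show "p2 \<cdot> (u \<cdot> i) = p2 \<cdot> \<iota>"
      using comp_assoc[OF i u(1) p(2)] u(3) zero_mor_unique[OF kernel_zero[OF ker] \<iota>(3)]
        comp_in_hom[OF i d] comp_in_hom[OF \<iota>(1) p(2)] P by (simp add: in_hom_iff)
  qed
  fix t Y
  assume t: "t \<in> hom A (Dom A p1) Y" and zero: "zero_mor A (t \<cdot> u)"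
  have "zero_mor A (t \<cdot> \<iota>)"
    using zero_mor_comp_right[OF zero, of i "Dom A i"] comp_assoc[OF i u(1) t] u_i i
      comp_in_hom[OF u(1) t] by (simp add: in_hom_iff)
  moreover have "cokernel A \<iota> p2"
    using product_projection_cokernel[OF P(1)] \<iota> P by simp
  ultimately obtain h where h: "h \<in> hom A (Cod A d) Y" "h \<cdot> p2 = t"
    using cokernel_factorE[of \<iota> p2 t Y] t \<iota>(1) p(2) P by (auto simp: in_hom_iff)
  have "h \<cdot> d = t \<cdot> u"
    using comp_assoc[OF u(1) p(2) h(1)] u(3) h(2) P by simp
  then have "zero_mor A h"
    using zero_mor_if_epi_comp[OF d_epi, of h Y] zero h d by (simp add: in_hom_iff)
  then show "zero_mor A t"
    using zero_mor_comp_right[of h p2 "Dom A p1"] h p(2) P by (simp add: in_hom_iff)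
qed

end

lemma short_exact_section_iso_direct_sum:
  assumes se: "short_exact A i d"
    and r: "r \<in> hom A (Cod A i) (Dom A i)" "r \<cdot> i = Id A (Dom A i)"
  shows "iso_direct_sum A (Cod A i) (Dom A i) (Cod A d)"
proof -
  note i = short_exact_in_hom(1)[OF se] and d = short_exact_in_hom(2)[OF se]
  obtain p1 p2 where P: "product A p1 p2" "Cod A p1 = Dom A i" "Cod A p2 = Cod A d"
    using product_exists Ob_if_in_hom i d by metis
  obtain u where u: "u \<in> hom A (Cod A i) (Dom A p1)" "p1 \<cdot> u = r" "p2 \<cdot> u = d"
    using product_factorE[OF P(1), of r "Cod A i" d] r d P by auto
  have "iso A u"
    using iso_if_mono_epi split_pairing_mono[OF se r P u] split_pairing_epi[OF se r P u] by blast
  then have "isomorphic A (Cod A i) (Dom A p1)"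
    using u(1) unfolding isomorphic_def by blast
  then show ?thesis
    unfolding iso_direct_sum_def using P by blast
qed

lemma iso_direct_sum_isomorphic:
  assumes "iso_direct_sum A M F C" "isomorphic A M' M"
  shows "iso_direct_sum A M' F C"
  using assms isomorphic_trans unfolding iso_direct_sum_def by blast

lemma iso_direct_sum_section:
  assumes "iso_direct_sum A M F C"
  obtains \<sigma> where "\<sigma> \<in> hom A C M" "is_section A \<sigma>"
proof -
  obtain p1 p2 \<phi> where P: "product A p1 p2" "Cod A p1 = F" "Cod A p2 = C"
    and \<phi>: "\<phi> \<in> hom A M (Dom A p1)" "iso A \<phi>"
    using assms unfolding iso_direct_sum_def isomorphic_def by blast
  obtain \<psi> where \<psi>: "\<psi> \<in> hom A (Dom A p1) M" "\<phi> \<cdot> \<psi> = Id A (Dom A p1)"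
    using isoE[OF \<phi>(2)] \<phi>(1) by (auto simp: in_hom_iff)
  obtain \<iota>2 where \<iota>2: "\<iota>2 \<in> hom A C (Dom A p1)" "p2 \<cdot> \<iota>2 = Id A C"
    using product_injections[OF P(1)] P by metis
  have "(p2 \<cdot> \<phi>) \<cdot> (\<psi> \<cdot> \<iota>2) = Id A C"
    using comp_assoc[OF \<iota>2(1) \<psi>(1) comp_in_hom[OF \<phi>(1) product_in_hom(2)[OF P(1)]]]
      comp_assoc[OF \<psi>(1) \<phi>(1) product_in_hom(2)[OF P(1)]] \<psi>(2)
      comp_id_right[OF product_in_hom(2)[OF P(1)]] \<iota>2(2) P by simp
  moreover have "p2 \<cdot> \<phi> \<in> hom A M C"
    using comp_in_hom[OF \<phi>(1) product_in_hom(2)[OF P(1)]] P by simp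
  ultimately show ?thesis
    using that is_sectionI comp_in_hom[OF \<iota>2(1) \<psi>(1)] by blast
qed


lemma iso_direct_sum_if_op:
  assumes "iso_direct_sum (op_cat A) M C F"
  shows "iso_direct_sum A M F C"
proof -
  obtain e1 e2 where E: "coproduct A e1 e2" "Dom A e1 = C" "Dom A e2 = F"
    and iso: "isomorphic A (Cod A e1) M"
    using assms unfolding iso_direct_sum_def by auto
  have Cod_e2: "Cod A e2 = Cod A e1"
    using E(1) by (simp add: coproduct_def)
  obtain q r where q: "q \<in> hom A (Cod A e1) C" "q \<cdot> e1 = Id A C" "zero_mor A (q \<cdot> e2)"
    and r: "r \<in> hom A (Cod A e1) F" "r \<cdot> e2 = Id A F"
    using abelian_category.product_injections[OF op_abelian_category, of e1 e2] E by simp blast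
  have "short_exact A e2 q"
    using abelian_category.product_short_exact[OF op_abelian_category, of e1 e2 q] E q by simp
  then have "iso_direct_sum A (Cod A e1) F C"
    using short_exact_section_iso_direct_sum[of e2 q r] r E q Cod_e2 by (simp add: in_hom_iff)
  then show ?thesis
    using iso_direct_sum_isomorphic isomorphic_sym[OF iso] by blast
qed

lemma iso_direct_sum_op_iff: "iso_direct_sum (op_cat A) M C F \<longleftrightarrow> iso_direct_sum A M F C"
  using iso_direct_sum_if_op abelian_category.iso_direct_sum_if_op[OF op_abelian_category, of M F C]
  by auto

lemma pullback_factor:
  assumes "pullback A i g j f" "x \<in> hom A X (Dom A g)" "y \<in> hom A X (Dom A i)" "g \<cdot> x = i \<cdot> y"
  shows "\<exists>!u. u \<in> hom A X (Dom A j) \<and> j \<cdot> u = x \<and> f \<cdot> u = y"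
proof -
  have universal: "\<forall>x\<in>Ar A. \<forall>y\<in>Ar A. Dom A x = Dom A y \<and> Cod A x = Dom A g \<and> Cod A y = Dom A i \<and>
      g \<cdot> x = i \<cdot> y \<longrightarrow> (\<exists>!u. u \<in> hom A (Dom A x) (Dom A j) \<and> j \<cdot> u = x \<and> f \<cdot> u = y)"
    using assms(1) unfolding pullback_def by (elim conjE)
  show ?thesis
    using universal[rule_format, of x y] assms(2-4) unfolding in_hom_iff by simp
qed

lemma pullbackI:
  assumes "i \<in> hom A (Dom A i) (Cod A g)" "g \<in> Ar A" "j \<in> hom A P (Dom A g)" "f \<in> hom A P (Dom A i)"
    and "g \<cdot> j = i \<cdot> f"
    and "\<And>x y X. x \<in> hom A X (Dom A g) \<Longrightarrow> y \<in> hom A X (Dom A i) \<Longrightarrow> g \<cdot> x = i \<cdot> y \<Longrightarrow>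
      \<exists>!u. u \<in> hom A X (Dom A j) \<and> j \<cdot> u = x \<and> f \<cdot> u = y"
  shows "pullback A i g j f"
  unfolding pullback_def
proof (intro conjI ballI impI)
  fix x y
  assume "x \<in> Ar A" "y \<in> Ar A"
    "Dom A x = Dom A y \<and> Cod A x = Dom A g \<and> Cod A y = Dom A i \<and> g \<cdot> x = i \<cdot> y"
  then show "\<exists>!u. u \<in> hom A (Dom A x) (Dom A j) \<and> j \<cdot> u = x \<and> f \<cdot> u = y"
    using assms(6)[of x "Dom A x" y] by (simp add: in_hom_iff)
qed (use assms in \<open>auto simp: in_hom_iff\<close>)

lemma pullback_kernel:
  assumes se: "short_exact A i d" and g: "g \<in> hom A X (Cod A i)" and pb: "pullback A i g j f"
  shows "kernel A (d \<cdot> g) j"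
proof (rule kernelI)
  note i = short_exact_in_hom(1)[OF se] and d = short_exact_in_hom(2)[OF se]
  have ker: "kernel A d i" and mono: "mono A i"
    using se by (simp_all add: short_exact_def)
  have j: "j \<in> hom A (Dom A j) X" and f: "f \<in> hom A (Dom A j) (Dom A i)" and comm: "g \<cdot> j = i \<cdot> f"
    using pb g unfolding pullback_def in_hom_iff by auto
  have dg: "d \<cdot> g \<in> hom A X (Cod A d)"
    using comp_in_hom[OF g d] .
  show "d \<cdot> g \<in> Ar A" "j \<in> Ar A" "Cod A j = Dom A (d \<cdot> g)"
    using dg j by (auto simp: in_hom_iff)
  have "(d \<cdot> g) \<cdot> j = (d \<cdot> i) \<cdot> f"
    using comp_assoc[OF j g d] comp_assoc[OF f i d] comm by simp
  then show "zero_mor A ((d \<cdot> g) \<cdot> j)"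
    using zero_mor_comp_right[OF kernel_zero[OF ker]] f comp_in_hom[OF i d] by (simp add: in_hom_iff)
  fix x Y
  assume x: "x \<in> hom A Y (Dom A (d \<cdot> g))" and zero: "zero_mor A ((d \<cdot> g) \<cdot> x)"
  then have x: "x \<in> hom A Y X"
    using dg by (simp add: in_hom_iff)
  obtain y where y: "y \<in> hom A Y (Dom A i)" "i \<cdot> y = g \<cdot> x"
    using kernel_factorE[OF ker, of "g \<cdot> x" Y] zero comp_assoc[OF x g d] comp_in_hom[OF x g] i d
    by (auto simp: in_hom_iff)
  have unique: "\<exists>!u. u \<in> hom A Y (Dom A j) \<and> j \<cdot> u = x \<and> f \<cdot> u = y"
    using pullback_factor[OF pb, of x Y y] x y g by (simp add: in_hom_iff)
  \<comment> \<open>the second leg is forced because i is mono\<close>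
  have "f \<cdot> v = y" if v: "v \<in> hom A Y (Dom A j)" "j \<cdot> v = x" for v
  proof -
    have "i \<cdot> (f \<cdot> v) = i \<cdot> y"
      using comp_assoc[OF v(1) f i] comp_assoc[OF v(1) j g] comm v(2) y(2) by simp
    then show ?thesis
      using mono_cancel[OF mono] comp_in_hom[OF v(1) f] y(1) by simp
  qed
  then show "\<exists>!u. u \<in> hom A Y (Dom A j) \<and> j \<cdot> u = x"
    using unique by blast
qed

lemma kernel_pullback:
  assumes se: "short_exact A i d" and g: "g \<in> hom A X (Cod A i)" and ker: "kernel A (d \<cdot> g) j"
    and f: "f \<in> hom A (Dom A j) (Dom A i)" and comm: "g \<cdot> j = i \<cdot> f"
  shows "pullback A i g j f"
proof -
  note i = short_exact_in_hom(1)[OF se] and d = short_exact_in_hom(2)[OF se]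
  have ker_d: "kernel A d i" and mono: "mono A i"
    using se by (simp_all add: short_exact_def)
  have dg: "d \<cdot> g \<in> hom A X (Cod A d)"
    using comp_in_hom[OF g d] .
  have j: "j \<in> hom A (Dom A j) X"
    using kernel_in_hom[OF ker] dg by (simp add: in_hom_iff)
  show ?thesis
  proof (rule pullbackI)
    show "i \<in> hom A (Dom A i) (Cod A g)" "g \<in> Ar A" "j \<in> hom A (Dom A j) (Dom A g)"
      "f \<in> hom A (Dom A j) (Dom A i)" "g \<cdot> j = i \<cdot> f"
      using i g j f comm by (auto simp: in_hom_iff)
    fix x y Y
    assume "x \<in> hom A Y (Dom A g)" and y: "y \<in> hom A Y (Dom A i)" and eq: "g \<cdot> x = i \<cdot> y"
    then have x: "x \<in> hom A Y X"
      using g by (simp add: in_hom_iff)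
    have "(d \<cdot> g) \<cdot> x = (d \<cdot> i) \<cdot> y"
      using comp_assoc[OF x g d] comp_assoc[OF y i d] eq by simp
    then have "zero_mor A ((d \<cdot> g) \<cdot> x)"
      using zero_mor_comp_right[OF kernel_zero[OF ker_d]] y comp_in_hom[OF i d] by (simp add: in_hom_iff)
    then have unique: "\<exists>!u. u \<in> hom A Y (Dom A j) \<and> j \<cdot> u = x"
      using kernel_factor[OF ker, of x Y] x dg by (simp add: in_hom_iff)
    have "f \<cdot> u = y" if u: "u \<in> hom A Y (Dom A j)" "j \<cdot> u = x" for u
    proof -
      have "i \<cdot> (f \<cdot> u) = i \<cdot> y"
        using comp_assoc[OF u(1) f i] comp_assoc[OF u(1) j g] comm u(2) eq by simp
      then show ?thesis
        using mono_cancel[OF mono] comp_in_hom[OF u(1) f] y by simp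
    qed
    then show "\<exists>!u. u \<in> hom A Y (Dom A j) \<and> j \<cdot> u = x \<and> f \<cdot> u = y"
      using unique by blast
  qed
qed

lemma pullback_exists:
  assumes se: "short_exact A i d" and g: "g \<in> hom A X (Cod A i)"
  obtains j f where "pullback A i g j f"
proof -
  note i = short_exact_in_hom(1)[OF se] and d = short_exact_in_hom(2)[OF se]
  have ker_d: "kernel A d i"
    using se by (simp add: short_exact_def)
  have dg: "d \<cdot> g \<in> hom A X (Cod A d)"
    using comp_in_hom[OF g d] .
  obtain j where ker: "kernel A (d \<cdot> g) j"
    using kernel_exists dg by (auto simp: in_hom_iff)
  have j: "j \<in> hom A (Dom A j) X"
    using kernel_in_hom[OF ker] dg by (simp add: in_hom_iff)
  have "zero_mor A (d \<cdot> (g \<cdot> j))"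
    using kernel_zero[OF ker] comp_assoc[OF j g d] by simp
  then obtain f where "f \<in> hom A (Dom A j) (Dom A i)" "i \<cdot> f = g \<cdot> j"
    using kernel_factorE[OF ker_d, of "g \<cdot> j" "Dom A j"] comp_in_hom[OF j g] i d
    by (auto simp: in_hom_iff)
  then show ?thesis
    using that kernel_pullback[OF se g ker] by metis
qed

lemma kernel_comp_mono:
  assumes ker: "kernel A f k" and f: "f \<in> hom A a b" and \<sigma>: "\<sigma> \<in> hom A b c" "mono A \<sigma>"
  shows "kernel A (\<sigma> \<cdot> f) k"
proof (rule kernelI)
  have k: "k \<in> hom A (Dom A k) a"
    using kernel_in_hom[OF ker] f by (simp add: in_hom_iff)
  show "\<sigma> \<cdot> f \<in> Ar A" "k \<in> Ar A" "Cod A k = Dom A (\<sigma> \<cdot> f)"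
    using comp_in_hom[OF f \<sigma>(1)] k by (auto simp: in_hom_iff)
  show "zero_mor A ((\<sigma> \<cdot> f) \<cdot> k)"
    using zero_mor_comp_left[OF kernel_zero[OF ker], of \<sigma> c] comp_assoc[OF k f \<sigma>(1)]
      comp_in_hom[OF k f] \<sigma>(1) by (simp add: in_hom_iff)
  fix x X
  assume x: "x \<in> hom A X (Dom A (\<sigma> \<cdot> f))" and zero: "zero_mor A ((\<sigma> \<cdot> f) \<cdot> x)"
  then have x: "x \<in> hom A X a"
    using comp_in_hom[OF f \<sigma>(1)] by (simp add: in_hom_iff)
  have "zero_mor A (f \<cdot> x)"
    using zero_mor_if_mono_comp[OF \<sigma>(2)] zero comp_assoc[OF x f \<sigma>(1)] comp_in_hom[OF x f] \<sigma>(1)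
    by (simp add: in_hom_iff)
  moreover have "x \<in> hom A X (Dom A f)"
    using x f by (simp add: in_hom_iff)
  ultimately show "\<exists>!u. u \<in> hom A X (Dom A k) \<and> k \<cdot> u = x"
    using kernel_factor[OF ker] by simp
qed


lemma fully_invariantI:
  assumes "mono A k"
    and "\<And>h. h \<in> hom A (Cod A k) (Cod A k) \<Longrightarrow> \<exists>\<alpha>\<in>hom A (Dom A k) (Dom A k). h \<cdot> k = k \<cdot> \<alpha>"
  shows "fully_invariant A k"
  using assms unfolding fully_invariant_def by blast

lemma fully_invariantE:
  assumes "fully_invariant A k" "h \<in> hom A (Cod A k) (Cod A k)"
  obtains \<alpha> where "\<alpha> \<in> hom A (Dom A k) (Dom A k)" "h \<cdot> k = k \<cdot> \<alpha>"
  using assms unfolding fully_invariant_def by blast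

lemma sec_st_comp:
  assumes j: "sec_st A st j" and l: "sec_st A st l" and Cod_l: "Cod A l = Dom A j"
  shows "sec_st A st (j \<cdot> l)"
proof -
  have j_sec: "is_section A j" and l_sec: "is_section A l"
    using j l by (simp_all add: sec_st_def)
  have j_hom: "j \<in> hom A (Dom A j) (Cod A j)" and l_hom: "l \<in> hom A (Dom A l) (Dom A j)"
    using mono_in_hom[OF section_mono[OF j_sec]] mono_in_hom[OF section_mono[OF l_sec]] Cod_l
    by simp_all
  have jl: "j \<cdot> l \<in> hom A (Dom A l) (Cod A j)"
    using comp_in_hom[OF l_hom j_hom] .
  obtain t where t: "t \<in> hom A (Cod A j) (Dom A j)" "t \<cdot> j = Id A (Dom A j)"
    using j_sec by (rule is_sectionE)
  obtain t' where t': "t' \<in> hom A (Dom A j) (Dom A l)" "t' \<cdot> l = Id A (Dom A l)"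
    using l_sec Cod_l by (metis is_sectionE)
  have "(t' \<cdot> t) \<cdot> (j \<cdot> l) = t' \<cdot> ((t \<cdot> j) \<cdot> l)"
    using comp_assoc[OF jl t(1) t'(1)] comp_assoc[OF l_hom j_hom t(1)] by simp
  also have "\<dots> = Id A (Dom A l)"
    using t(2) comp_id_left[OF l_hom] t'(2) by simp
  finally have jl_sec: "is_section A (j \<cdot> l)"
    using is_sectionI[OF jl comp_in_hom[OF t(1) t'(1)]] by simp
  moreover have "fully_invariant A (j \<cdot> l)" if st
  proof (rule fully_invariantI[OF section_mono[OF jl_sec]])
    have j_fi: "fully_invariant A j" and l_fi: "fully_invariant A l"
      using j l \<open>st\<close> by (simp_all add: sec_st_def)
    fix h
    assume "h \<in> hom A (Cod A (j \<cdot> l)) (Cod A (j \<cdot> l))"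
    then have h: "h \<in> hom A (Cod A j) (Cod A j)"
      using jl by (simp add: in_hom_iff)
    obtain \<alpha> where \<alpha>: "\<alpha> \<in> hom A (Dom A j) (Dom A j)" "h \<cdot> j = j \<cdot> \<alpha>"
      using fully_invariantE[OF j_fi h] .
    obtain \<beta> where \<beta>: "\<beta> \<in> hom A (Dom A l) (Dom A l)" "\<alpha> \<cdot> l = l \<cdot> \<beta>"
      using fully_invariantE[OF l_fi] \<alpha>(1) Cod_l by metis
    have "h \<cdot> (j \<cdot> l) = j \<cdot> (\<alpha> \<cdot> l)"
      using comp_assoc[OF l_hom j_hom h] comp_assoc[OF l_hom \<alpha>(1) j_hom] \<alpha>(2) by simp
    also have "\<dots> = (j \<cdot> l) \<cdot> \<beta>"
      using comp_assoc[OF \<beta>(1) l_hom j_hom] \<beta>(2) by simp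
    finally show "\<exists>\<beta>\<in>hom A (Dom A (j \<cdot> l)) (Dom A (j \<cdot> l)). h \<cdot> (j \<cdot> l) = (j \<cdot> l) \<cdot> \<beta>"
      using \<beta>(1) jl by (auto simp: in_hom_iff)
  qed
  ultimately show ?thesis
    by (simp add: sec_st_def)
qed

lemma sec_st_cancel_left:
  assumes j: "is_section A j" and jl: "sec_st A st (j \<cdot> l)" and l: "l \<in> hom A a (Dom A j)"
  shows "sec_st A st l"
proof -
  have j_hom: "j \<in> hom A (Dom A j) (Cod A j)"
    using mono_in_hom[OF section_mono[OF j]] .
  have jl_hom: "j \<cdot> l \<in> hom A a (Cod A j)"
    using comp_in_hom[OF l j_hom] .
  obtain t where t: "t \<in> hom A (Cod A j) (Dom A j)" "t \<cdot> j = Id A (Dom A j)"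
    using j by (rule is_sectionE)
  obtain s where s: "s \<in> hom A (Cod A j) a" "s \<cdot> (j \<cdot> l) = Id A a"
    using jl jl_hom unfolding sec_st_def by (metis is_sectionE in_hom_iff)
  have l_sec: "is_section A l"
    using is_sectionI[OF l comp_in_hom[OF j_hom s(1)]] comp_assoc[OF l j_hom s(1)] s(2) by simp
  moreover have "fully_invariant A l" if st
  proof (rule fully_invariantI[OF section_mono[OF l_sec]])
    have jl_fi: "fully_invariant A (j \<cdot> l)"
      using jl \<open>st\<close> by (simp add: sec_st_def)
    fix h
    assume "h \<in> hom A (Cod A l) (Cod A l)"
    then have h: "h \<in> hom A (Dom A j) (Dom A j)"
      using l by (simp add: in_hom_iff)
    have jht: "j \<cdot> (h \<cdot> t) \<in> hom A (Cod A j) (Cod A j)"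
      using comp_in_hom[OF comp_in_hom[OF t(1) h] j_hom] .
    \<comment> \<open>transport h to the endomorphism j h t of M, which j l absorbs\<close>
    obtain \<beta> where \<beta>: "\<beta> \<in> hom A a a" "(j \<cdot> (h \<cdot> t)) \<cdot> (j \<cdot> l) = (j \<cdot> l) \<cdot> \<beta>"
      using fully_invariantE[OF jl_fi, of "j \<cdot> (h \<cdot> t)"] jht jl_hom by (auto simp: in_hom_iff)
    have "(j \<cdot> (h \<cdot> t)) \<cdot> (j \<cdot> l) = j \<cdot> (h \<cdot> ((t \<cdot> j) \<cdot> l))"
      using comp_assoc[OF jl_hom comp_in_hom[OF t(1) h] j_hom] comp_assoc[OF jl_hom t(1) h]
        comp_assoc[OF l j_hom t(1)] by simp
    also have "\<dots> = j \<cdot> (h \<cdot> l)"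
      using t(2) comp_id_left[OF l] by simp
    finally have "j \<cdot> (h \<cdot> l) = j \<cdot> (l \<cdot> \<beta>)"
      using \<beta>(2) comp_assoc[OF \<beta>(1) l j_hom] by simp
    then have "h \<cdot> l = l \<cdot> \<beta>"
      using mono_cancel[OF section_mono[OF j]] comp_in_hom[OF l h] comp_in_hom[OF \<beta>(1) l] by simp
    then show "\<exists>\<alpha>\<in>hom A (Dom A l) (Dom A l). h \<cdot> l = l \<cdot> \<alpha>"
      using \<beta>(1) l by (auto simp: in_hom_iff)
  qed
  ultimately show ?thesis
    by (simp add: sec_st_def)
qed


lemma self_rickart_if_self_F_split:
  assumes se: "short_exact A i d" and split: "self_F_split A st i"
    and comparison: "kernel_comparison_sections A st i"
  shows "self_rickart A st (Cod A i)"
  unfolding self_rickart_def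
proof (intro ballI allI impI)
  fix g k
  assume g: "g \<in> hom A (Cod A i) (Cod A i)" and ker: "kernel A g k"
  note i = short_exact_in_hom(1)[OF se]
  obtain j f where pb: "pullback A i g j f"
    using pullback_exists[OF se g] .
  have j: "sec_st A st j"
    using split g pb unfolding self_F_split_def by blast
  have k: "k \<in> hom A (Dom A k) (Cod A i)"
    using kernel_in_hom[OF ker] g by (simp add: in_hom_iff)
  obtain z where z: "z \<in> hom A (Dom A k) (Dom A i)" "zero_mor A z"
    using zero_mor_exists Ob_if_in_hom k i by metis
  have "g \<cdot> k = i \<cdot> z"
    using zero_mor_unique[OF kernel_zero[OF ker] zero_mor_comp_left[OF z(2)]] comp_in_hom[OF k g]
      comp_in_hom[OF z(1) i] i z(1) by (simp add: in_hom_iff)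
  then obtain l where l: "l \<in> hom A (Dom A k) (Dom A j)" "j \<cdot> l = k"
    using ex1_implies_ex[OF pullback_factor[OF pb, of k "Dom A k" z]] k z(1) g
    by (auto simp: in_hom_iff)
  have "sec_st A st l"
    using comparison g pb ker l unfolding kernel_comparison_sections_def by blast
  then show "sec_st A st k"
    using sec_st_comp[OF j, of l] l by (simp add: in_hom_iff)
qed

lemma iso_direct_sum_if_self_F_split:
  assumes se: "short_exact A i d" and split: "self_F_split A st i"
  shows "iso_direct_sum A (Cod A i) (Dom A i) (Cod A d)"
proof -
  note i = short_exact_in_hom(1)[OF se] and d = short_exact_in_hom(2)[OF se]
  have id_M: "Id A (Cod A i) \<in> hom A (Cod A i) (Cod A i)" and id_F: "Id A (Dom A i) \<in> hom A (Dom A i) (Dom A i)"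
    using id_in_hom Ob_if_in_hom[OF i] by simp_all
  have "kernel A (d \<cdot> Id A (Cod A i)) i"
    using se comp_id_right[OF d] by (simp add: short_exact_def)
  then have "pullback A i (Id A (Cod A i)) i (Id A (Dom A i))"
    using kernel_pullback[OF se id_M _ _] id_F comp_id_left[OF i] comp_id_right[OF i] i
    by (simp add: in_hom_iff)
  then have "is_section A i"
    using split id_M unfolding self_F_split_def sec_st_def by blast
  then obtain r where "r \<in> hom A (Cod A i) (Dom A i)" "r \<cdot> i = Id A (Dom A i)"
    using i by (metis is_sectionE in_hom_iff)
  then show ?thesis
    using short_exact_section_iso_direct_sum[OF se] by blast
qed

lemma self_F_split_if_self_rickart_direct_sum:
  assumes se: "short_exact A i d" and rickart: "self_rickart A st (Cod A i)"
    and ds: "iso_direct_sum A (Cod A i) (Dom A i) (Cod A d)"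
  shows "self_F_split A st i" "kernel_comparison_sections A st i"
proof -
  note d = short_exact_in_hom(2)[OF se]
  obtain \<sigma> where \<sigma>: "\<sigma> \<in> hom A (Cod A d) (Cod A i)" "is_section A \<sigma>"
    using iso_direct_sum_section[OF ds] .
  have pullback_sec: "sec_st A st j"
    if g: "g \<in> hom A (Cod A i) (Cod A i)" and pb: "pullback A i g j f" for g j f
  proof -
    have "kernel A (\<sigma> \<cdot> (d \<cdot> g)) j"
      using kernel_comp_mono[OF pullback_kernel[OF se g pb] comp_in_hom[OF g d] \<sigma>(1)
          section_mono[OF \<sigma>(2)]] .
    then show ?thesis
      using rickart comp_in_hom[OF comp_in_hom[OF g d] \<sigma>(1)] unfolding self_rickart_def by blast
  qed
  then show "self_F_split A st i"
    unfolding self_F_split_def by blast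
  show "kernel_comparison_sections A st i"
    unfolding kernel_comparison_sections_def
  proof (intro ballI allI impI, elim conjE)
    fix g j f k l
    assume g: "g \<in> hom A (Cod A i) (Cod A i)" and pb: "pullback A i g j f" and ker: "kernel A g k"
      and l: "l \<in> hom A (Dom A k) (Dom A j)" and jl: "j \<cdot> l = k"
    have "sec_st A st (j \<cdot> l)"
      using rickart g ker jl unfolding self_rickart_def by blast
    moreover have "is_section A j"
      using pullback_sec[OF g pb] by (simp add: sec_st_def)
    ultimately show "sec_st A st l"
      using sec_st_cancel_left l by blast
  qed
qed

lemma self_F_split_iff_self_rickart_direct_sum:
  assumes "short_exact A i d"
  shows "self_F_split A st i \<and> kernel_comparison_sections A st i \<longleftrightarrow>
    self_rickart A st (Cod A i) \<and> iso_direct_sum A (Cod A i) (Dom A i) (Cod A d)"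
  using assms self_rickart_if_self_F_split iso_direct_sum_if_self_F_split
    self_F_split_if_self_rickart_direct_sum by blast

lemma dual_self_F_split_iff_dual_self_rickart_direct_sum:
  assumes "short_exact A i d"
  shows "dual_self_F_split A st d \<and> cokernel_comparison_retractions A st d \<longleftrightarrow>
    dual_self_rickart A st (Dom A d) \<and> iso_direct_sum A (Dom A d) (Dom A i) (Cod A d)"
  using abelian_category.self_F_split_iff_self_rickart_direct_sum[OF op_abelian_category, of d i st]
    assms iso_direct_sum_op_iff by simp

end

theorem theorem4p12:
  fixes A :: "('o, 'm) cat" and i d :: 'm
  assumes "abelian A"
    and "short_exact A i d"
    and "fully_invariant A i"
  shows "\<forall>st::bool.
    ((self_F_split A st i \<and> kernel_comparison_sections A st i) \<longleftrightarrow>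
       (self_rickart A st (Cod A i) \<and> iso_direct_sum A (Cod A i) (Dom A i) (Cod A d))) \<and>
    ((dual_self_F_split A st d \<and> cokernel_comparison_retractions A st d) \<longleftrightarrow>
       (dual_self_rickart A st (Dom A d) \<and> iso_direct_sum A (Dom A d) (Dom A i) (Cod A d)))"
proof
  fix st
  interpret abelian_category A
    using assms(1) by unfold_locales
  show "((self_F_split A st i \<and> kernel_comparison_sections A st i) \<longleftrightarrow>
       (self_rickart A st (Cod A i) \<and> iso_direct_sum A (Cod A i) (Dom A i) (Cod A d))) \<and>
    ((dual_self_F_split A st d \<and> cokernel_comparison_retractions A st d) \<longleftrightarrow>
       (dual_self_rickart A st (Dom A d) \<and> iso_direct_sum A (Dom A d) (Dom A i) (Cod A d)))"
    using self_F_split_iff_self_rickart_direct_sum[OF assms(2)]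
      dual_self_F_split_iff_dual_self_rickart_direct_sum[OF assms(2)] by blast
qed

end
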